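(* Let $\gamma$ be a positive integer, $1\le n'\le n$, and $\lambda_1,\dots,\lambda_n\in\mathbb C$. Assume (Condition 1) there exist $0\le\theta_{\Lambda'}<2\pi$ and $0<\delta_{\Lambda'}<\pi/2$ with $\{\lambda_1,\dots,\lambda_{n'}\}\subset\{\eta\ne0:|\arg\eta-\theta_{\Lambda'}|<\delta_{\Lambda'}\}$, and (Condition 2) $\sum_{j=1}^{n'}\lambda_jm_j-\lambda_i\ne0$ for all $m\in\mathbb N^{n'}$ with $|m|\ge2$ and all $1\le i\le n$. Let $\mathfrak L=\bigcup_{i=1}^n\{\sum_{j=1}^{n'}\lambda_jm_j-\lambda_i: m\in\mathbb N^{n'},|m|\ge2\}$. Then there exist an interval $\widehat J=(\widehat\theta_0-\widehat\epsilon_0,\widehat\theta_0+\widehat\epsilon_0)$ with $\widehat\epsilon_0>0$ and a constant $C_{\widehat J}>0$ such that $S(\widehat J)\cap(-\overline{\mathfrak L})=\emptyset$ and $$\Big|\gamma\eta+\sum_{j=1}^{n'}\lambda_jm_j-\lambda_i\Big|\ge C_{\widehat J}(|\eta|+|m|)$$ for all $\eta\in S(\widehat J)$, all $1\le i\le n$ and all $m\in\mathbb N^{n'}$ with $|m|\ge2$.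
   Context: $\mathbb N$ is the set of nonnegative integers, $|m|=\sum_j m_j$. For an open interval $J$, $S(J)=\{x\in\mathbb C\setminus\{0\}:\arg x\in J\}$. $\overline{\mathfrak L}$ is the closure of $\mathfrak L$ in $\mathbb C$. *)

theory Defs
  imports "HOL-Analysis.Analysis"
begin

definition sector :: "real set \<Rightarrow> complex set" where
  "sector J = {x. x \<noteq> 0 \<and> (\<exists>t\<in>J. x = complex_of_real (norm x) * cis t)}"

text \<open>Multi-indices m in N^{n'}, represented as functions nat => nat supported in {1..n'}.\<close>
definition multi_idx :: "nat \<Rightarrow> (nat \<Rightarrow> nat) set" where
  "multi_idx n' = {m. \<forall>j. j \<notin> {1..n'} \<longrightarrow> m j = 0}"

definition mabs :: "nat \<Rightarrow> (nat \<Rightarrow> nat) \<Rightarrow> nat" where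
  "mabs n' m = (\<Sum>j=1..n'. m j)"

definition Lset :: "nat \<Rightarrow> nat \<Rightarrow> (nat \<Rightarrow> complex) \<Rightarrow> complex set" where
  "Lset n n' lam = (\<Union>i\<in>{1..n}. {(\<Sum>j=1..n'. lam j * of_nat (m j)) - lam i | m.
      m \<in> multi_idx n' \<and> mabs n' m \<ge> 2})"

end

theory Submission
  imports Defs
begin

text \<open>
  Let \<open>u = cis \<theta>\<close> be the axis of the sector containing the \<open>\<lambda>\<^sub>j\<close> with \<open>j \<le> n'\<close>. Then
  \<open>Re (cnj u * \<lambda>\<^sub>j) \<ge> c > 0\<close>, hence \<open>Re (cnj u * \<Sum> \<lambda>\<^sub>j m\<^sub>j) \<ge> c |m|\<close>. For \<open>|m| \<ge> M\<close> with \<open>M\<close>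
  large this dominates every \<open>\<lambda>\<^sub>i\<close>, and for \<open>\<eta>\<close> within \<open>\<pi>/3\<close> of the axis
  \<open>Re (cnj u * \<gamma> \<eta>) \<ge> |\<eta>|/2\<close>; taking the real part of \<open>cnj u * (\<gamma> \<eta> + \<Sum> \<lambda>\<^sub>j m\<^sub>j - \<lambda>\<^sub>i)\<close>
  gives the estimate. The finitely many remaining values \<open>w = \<lambda>\<^sub>i - \<Sum> \<lambda>\<^sub>j m\<^sub>j\<close> with
  \<open>2 \<le> |m| < M\<close> are nonzero by Condition 2, so each lies on the ray of at most one direction
  modulo \<open>2\<pi>\<close>. Choosing \<open>\<theta>\<^sub>0\<close> near \<open>\<theta>\<close> off these directions, every such \<open>w\<close> has distance at
  least \<open>\<epsilon> (x + 1)\<close> from all points \<open>x cis t\<close> with \<open>x \<ge> 0\<close> and \<open>t\<close> near \<open>\<theta>\<^sub>0\<close>.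
  Disjointness from \<open>- closure \<L>\<close> follows because the estimate keeps \<open>\<eta> + \<L>\<close> away from \<open>0\<close>.
\<close>

lemma eventually_at_right_0_ex_pos:
  assumes "\<forall>\<^sub>F x in at_right (0::real). P x"
  shows "\<exists>x>0. P x"
  using eventually_happens'[OF _ eventually_conj[OF eventually_at_right_less assms]] by auto

lemma ex_nat_mult_ge_finite:
  fixes f :: "'a \<Rightarrow> real"
  assumes "finite I" "0 < c"
  shows "\<exists>M::nat. 0 < M \<and> (\<forall>i\<in>I. f i \<le> c * real M)"
proof -
  have bound: "\<forall>\<^sub>F M in sequentially. f i \<le> c * M" for i
  proof -
    obtain N :: nat where "f i / c \<le> N"
      using real_arch_simple by blast
    then have "f i \<le> c * N"
      using assms(2) by (simp add: pos_divide_le_eq mult.commute)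
    moreover have "c * N \<le> c * M" if "N \<le> M" for M
      using that assms(2) by (intro mult_left_mono) auto
    ultimately have "f i \<le> c * M" if "N \<le> M" for M
      using that by (meson order_trans)
    then show ?thesis
      unfolding eventually_sequentially by blast
  qed
  have "\<forall>\<^sub>F M in sequentially. 0 < M \<and> (\<forall>i\<in>I. f i \<le> c * real M)"
  proof (rule eventually_conj)
    show "\<forall>\<^sub>F M in sequentially. 0 < M"
      by (rule eventually_gt_at_top)
    show "\<forall>\<^sub>F M in sequentially. \<forall>i\<in>I. f i \<le> c * M"
      using assms(1) bound by (intro eventually_ball_finite) auto
  qed
  then show ?thesis
    using eventually_happens'[OF sequentially_bot] by blast
qed

lemma sector_mono: "J \<subseteq> K \<Longrightarrow> sector J \<subseteq> sector K"
  unfolding sector_def by blast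

lemma of_real_mult_in_sector:
  assumes "\<eta> \<in> sector J" "0 < r"
  shows "complex_of_real r * \<eta> \<in> sector J"
proof -
  obtain t where t: "t \<in> J" "\<eta> = complex_of_real (norm \<eta>) * cis t" "\<eta> \<noteq> 0"
    using assms(1) unfolding sector_def by auto
  have "complex_of_real r * \<eta> = complex_of_real (norm (complex_of_real r * \<eta>)) * cis t"
    using assms(2) by (subst t(2)) (simp add: norm_mult)
  then show ?thesis
    using t assms(2) unfolding sector_def by auto
qed

lemma Re_cnj_cis_mult_ge_in_sector:
  assumes "z \<in> sector {\<theta> - a<..<\<theta> + a}" and "a \<le> pi"
  shows "cos a * norm z \<le> Re (cnj (cis \<theta>) * z)"
proof -
  obtain t where "t \<in> {\<theta> - a<..<\<theta> + a}" and z: "z = complex_of_real (norm z) * cis t"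
    using assms(1) unfolding sector_def by auto
  then have "\<bar>t - \<theta>\<bar> < a"
    by auto
  have "cnj (cis \<theta>) * z = complex_of_real (norm z) * cis (t - \<theta>)"
    by (subst z) (simp add: cis_cnj cis_mult algebra_simps)
  then have "Re (cnj (cis \<theta>) * z) = norm z * cos \<bar>t - \<theta>\<bar>"
    by simp
  moreover have "cos a \<le> cos \<bar>t - \<theta>\<bar>"
    using \<open>\<bar>t - \<theta>\<bar> < a\<close> assms(2) by (intro cos_monotone_0_pi_le) auto
  ultimately show ?thesis
    by (simp add: mult.commute mult_left_mono)
qed

lemma ex_pos_Re_lower_bound_in_sector:
  assumes "finite A" "A \<subseteq> sector {\<theta> - \<delta><..<\<theta> + \<delta>}" "\<delta> < pi / 2"
  shows "\<exists>c>0. \<forall>z\<in>A. c \<le> Re (cnj (cis \<theta>) * z)"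
proof (rule eventually_at_right_0_ex_pos, intro eventually_ball_finite ballI assms(1))
  fix z assume "z \<in> A"
  then have z: "z \<in> sector {\<theta> - \<delta><..<\<theta> + \<delta>}"
    using assms(2) by auto
  then have "z \<noteq> 0" "0 < \<delta>"
    unfolding sector_def by auto
  then have "0 < cos \<delta> * norm z"
    using assms(3) by (simp add: cos_gt_zero_pi)
  also have "\<dots> \<le> Re (cnj (cis \<theta>) * z)"
    by (rule Re_cnj_cis_mult_ge_in_sector[OF z]) (use assms(3) pi_gt_zero in linarith)
  finally show "\<forall>\<^sub>F c in at_right 0. c \<le> Re (cnj (cis \<theta>) * z)"
    by (rule eventually_mono[OF eventually_at_right_real]) auto
qed

lemma sector_inter_uminus_closure_empty:
  assumes "0 < r" "0 < C"
    and bound: "\<And>\<eta> z. \<eta> \<in> sector J \<Longrightarrow> z \<in> A \<Longrightarrow> C * norm \<eta> \<le> norm (complex_of_real r * \<eta> + z)"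
  shows "sector J \<inter> uminus ` closure A = {}"
proof (rule ccontr)
  assume "sector J \<inter> uminus ` closure A \<noteq> {}"
  then obtain l where l: "l \<in> closure A" "- l \<in> sector J"
    by auto
  define \<eta> where "\<eta> = complex_of_real (1 / r) * - l"
  have \<eta>: "\<eta> \<in> sector J"
    unfolding \<eta>_def using l(2) assms(1) by (intro of_real_mult_in_sector) auto
  then have "0 < C * norm \<eta>"
    using assms(2) unfolding sector_def by auto
  then obtain z where z: "z \<in> A" "dist z l < C * norm \<eta>"
    using l(1) unfolding closure_approachable by blast
  have "complex_of_real r * \<eta> + z = z - l"
    unfolding \<eta>_def using assms(1) by simp
  then have "C * norm \<eta> \<le> dist z l"
    using bound[OF \<eta> z(1)] by (simp add: dist_norm)
  with z(2) show False
    by simp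
qed

subsection \<open>Directions avoiding finitely many rays\<close>

definition ray :: "real \<Rightarrow> complex set" where
  "ray t = (\<lambda>r. complex_of_real r * cis t) ` {0..}"

lemma ray_direction_unique:
  assumes "z \<noteq> 0" "z \<in> ray s" "z \<in> ray t" "\<bar>s - t\<bar> < 2 * pi"
  shows "s = t"
proof -
  obtain r q where r: "0 \<le> r" "z = complex_of_real r * cis s"
    and q: "0 \<le> q" "z = complex_of_real q * cis t"
    using assms(2,3) unfolding ray_def by auto
  have "norm z = r"
    using r by (simp add: norm_mult)
  moreover have "norm z = q"
    using q by (simp add: norm_mult)
  ultimately
  have "cis s = cis t"
    using r q assms(1) by auto
  then obtain k :: int where k: "s = t + 2 * pi * k"
    using sin_cos_eq_iff[of s t] by (auto simp: complex_eq_iff)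
  then have "2 * pi * \<bar>real_of_int k\<bar> < 2 * pi * 1"
    using assms(4) by (simp add: abs_mult)
  then have "\<bar>real_of_int k\<bar> < 1"
    by (rule mult_less_cancel_left_pos[THEN iffD1, rotated]) simp
  then have "k = 0"
    by linarith
  then show ?thesis
    using k by simp
qed

lemma ex_direction_avoiding_rays:
  assumes "finite W" "0 \<notin> W" "a < b" "b - a \<le> 2 * pi"
  shows "\<exists>t\<in>{a<..<b}. \<forall>w\<in>W. w \<notin> ray t"
proof -
  have "finite (\<Union>w\<in>W. {t\<in>{a<..<b}. w \<in> ray t})"
  proof (intro finite_UN_I assms(1))
    fix w assume w: "w \<in> W"
    have "{t\<in>{a<..<b}. w \<in> ray t} \<subseteq> {s}" if "s \<in> {t\<in>{a<..<b}. w \<in> ray t}" for s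
    proof
      fix t assume "t \<in> {t\<in>{a<..<b}. w \<in> ray t}"
      moreover have "\<bar>s - t\<bar> < 2 * pi"
        using that calculation assms(4) by auto
      ultimately show "t \<in> {s}"
        using that w assms(2) ray_direction_unique[of w s t] by auto
    qed
    then show "finite {t\<in>{a<..<b}. w \<in> ray t}"
      by (meson finite.emptyI finite.insertI finite_subset subsetI)
  qed
  moreover have "infinite {a<..<b}"
    using assms(3) by simp
  ultimately have "infinite ({a<..<b} - (\<Union>w\<in>W. {t\<in>{a<..<b}. w \<in> ray t}))"
    by (rule Diff_infinite_finite)
  then obtain t where "t \<in> {a<..<b} - (\<Union>w\<in>W. {t\<in>{a<..<b}. w \<in> ray t})"
    using infinite_imp_nonempty by blast
  then show ?thesis
    by blast
qed

lemma cos_minus_mult_sin_ge: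
  fixes s k :: real
  assumes "\<bar>s\<bar> \<le> pi / 3" and "\<bar>s\<bar> \<le> 1 / (4 * (\<bar>k\<bar> + 1))"
  shows "1 / 4 \<le> cos s - k * sin s"
proof -
  have "cos (pi / 3) \<le> cos \<bar>s\<bar>"
    using assms(1) by (intro cos_monotone_0_pi_le) auto
  then have "1 / 2 \<le> cos s"
    by (simp add: cos_60)
  have "\<bar>k * sin s\<bar> \<le> (\<bar>k\<bar> + 1) * \<bar>s\<bar>"
    unfolding abs_mult by (intro mult_mono abs_sin_x_le_abs_x) auto
  also have "\<dots> \<le> (\<bar>k\<bar> + 1) * (1 / (4 * (\<bar>k\<bar> + 1)))"
    using assms(2) by (intro mult_left_mono) auto
  also have "\<dots> = 1 / 4"
    by simp
  finally show ?thesis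
    using \<open>1 / 2 \<le> cos s\<close> by linarith
qed

lemma norm_cis_minus_ge_off_nonneg_reals:
  assumes "\<not> (Im z = 0 \<and> 0 \<le> Re z)"
  shows "\<exists>\<epsilon>>0. \<exists>C>0. \<forall>s x. \<bar>s\<bar> < \<epsilon> \<longrightarrow> 0 \<le> x \<longrightarrow>
           C * (x + 1) \<le> norm (complex_of_real x * cis s - z)"
proof -
  \<comment> \<open>the functional \<open>v \<mapsto> Re v - k Im v\<close> is positive on \<open>-z\<close> and on directions close to \<open>1\<close>\<close>
  obtain k b where b: "0 < b" "b \<le> k * Im z - Re z"
  proof (cases "Im z = 0")
    case True
    then show ?thesis
      using assms that[of "- Re z" 0] by auto
  next
    case False
    then show ?thesis
      using that[of 1 "(Re z + 1) / Im z"] by simp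
  qed
  define p where "p = Complex 1 k"
  have p: "0 < norm p"
    unfolding p_def by (auto simp: complex_eq_iff)
  define \<epsilon> where "\<epsilon> = min (pi / 3) (1 / (4 * (\<bar>k\<bar> + 1)))"
  define C where "C = min (1 / 4) b / norm p"
  have bound: "C * (x + 1) \<le> norm (complex_of_real x * cis s - z)" if s: "\<bar>s\<bar> < \<epsilon>" and x: "0 \<le> x" for s x
  proof -
    have "1 / 4 \<le> cos s - k * sin s"
      using s unfolding \<epsilon>_def by (intro cos_minus_mult_sin_ge) auto
    then have "min (1 / 4) b * x \<le> x * (cos s - k * sin s)"
      using x by (metis min.cobounded1 mult.commute mult_right_mono order_trans)
    then have "min (1 / 4) b * (x + 1) \<le> x * (cos s - k * sin s) + (k * Im z - Re z)"
      using b(2) by (simp add: distrib_left min_le_iff_disj)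
    also have "\<dots> = Re (p * (complex_of_real x * cis s - z))"
      unfolding p_def by (simp add: algebra_simps)
    also have "\<dots> \<le> norm p * norm (complex_of_real x * cis s - z)"
      using complex_Re_le_cmod by (metis norm_mult)
    finally show ?thesis
      using p unfolding C_def by (simp add: field_simps)
  qed
  have "0 < \<epsilon>" "0 < C"
    unfolding \<epsilon>_def C_def using b p by auto
  with bound show ?thesis
    by (intro exI[of _ \<epsilon>] exI[of _ C]) auto
qed

lemma eventually_norm_cis_minus_ge_off_ray:
  assumes "w \<notin> ray \<theta>"
  shows "\<forall>\<^sub>F \<delta> in at_right 0. \<forall>t x. \<bar>t - \<theta>\<bar> < \<delta> \<longrightarrow> 0 \<le> x \<longrightarrow>
           \<delta> * (x + 1) \<le> norm (complex_of_real x * cis t - w)"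
proof -
  define z where "z = cnj (cis \<theta>) * w"
  have "w = cis \<theta> * z"
    unfolding z_def by (simp add: cis_cnj cis_mult flip: mult.assoc)
  then have "w = complex_of_real (Re z) * cis \<theta>" if "Im z = 0"
    using that by (simp add: complex_eq_iff)
  then have off: "\<not> (Im z = 0 \<and> 0 \<le> Re z)"
    using assms unfolding ray_def by auto
  obtain \<epsilon> C where "0 < \<epsilon>" "0 < C" and bound: "\<forall>s x. \<bar>s\<bar> < \<epsilon> \<longrightarrow> 0 \<le> x \<longrightarrow>
      C * (x + 1) \<le> norm (complex_of_real x * cis s - z)"
    using norm_cis_minus_ge_off_nonneg_reals[OF off] by blast
  have rotate: "norm (complex_of_real x * cis t - w) = norm (complex_of_real x * cis (t - \<theta>) - z)" for t x
  proof -
    have "cis (t - \<theta>) = cnj (cis \<theta>) * cis t"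
      by (simp add: cis_cnj cis_mult)
    then have "complex_of_real x * cis (t - \<theta>) - z = cnj (cis \<theta>) * (complex_of_real x * cis t - w)"
      unfolding z_def by (simp add: algebra_simps)
    then show ?thesis
      by (simp add: norm_mult)
  qed
  show ?thesis
  proof (rule eventually_at_rightI)
    fix \<delta> assume \<delta>: "\<delta> \<in> {0<..<min \<epsilon> C}"
    show "\<forall>t x. \<bar>t - \<theta>\<bar> < \<delta> \<longrightarrow> 0 \<le> x \<longrightarrow> \<delta> * (x + 1) \<le> norm (complex_of_real x * cis t - w)"
    proof (intro allI impI)
      fix t x :: real assume t: "\<bar>t - \<theta>\<bar> < \<delta>" and x: "0 \<le> x"
      have "\<delta> * (x + 1) \<le> C * (x + 1)"
        using \<delta> x by (intro mult_right_mono) auto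
      also have "\<dots> \<le> norm (complex_of_real x * cis t - w)"
        unfolding rotate using bound t \<delta> x by auto
      finally show "\<delta> * (x + 1) \<le> norm (complex_of_real x * cis t - w)" .
    qed
  qed (use \<open>0 < \<epsilon>\<close> \<open>0 < C\<close> in auto)
qed

lemma direction_uniformly_off_rays:
  assumes "finite W" "0 \<notin> W" "0 < a" "a \<le> pi"
  obtains \<theta>0 \<epsilon> where "\<bar>\<theta>0 - \<theta>\<bar> < a" "0 < \<epsilon>" "\<epsilon> \<le> a"
    "\<forall>w\<in>W. \<forall>t x. \<bar>t - \<theta>0\<bar> < \<epsilon> \<longrightarrow> 0 \<le> x \<longrightarrow> \<epsilon> * (x + 1) \<le> norm (complex_of_real x * cis t - w)"
proof -
  have "\<exists>\<theta>0\<in>{\<theta> - a<..<\<theta> + a}. \<forall>w\<in>W. w \<notin> ray \<theta>0"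
    by (rule ex_direction_avoiding_rays[OF assms(1,2)]) (use assms(3,4) in auto)
  then obtain \<theta>0 where "\<theta>0 \<in> {\<theta> - a<..<\<theta> + a}" and off: "\<forall>w\<in>W. w \<notin> ray \<theta>0"
    by blast
  then have \<theta>0: "\<bar>\<theta>0 - \<theta>\<bar> < a"
    by auto
  have "\<forall>\<^sub>F \<epsilon> in at_right 0. \<epsilon> \<le> a"
    using eventually_at_right_real[OF assms(3)] by (rule eventually_mono) auto
  moreover have "\<forall>\<^sub>F \<epsilon> in at_right 0. \<forall>w\<in>W. \<forall>t x. \<bar>t - \<theta>0\<bar> < \<epsilon> \<longrightarrow> 0 \<le> x \<longrightarrow>
      \<epsilon> * (x + 1) \<le> norm (complex_of_real x * cis t - w)"
    using assms(1) off eventually_norm_cis_minus_ge_off_ray by (intro eventually_ball_finite) auto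
  ultimately have "\<exists>\<epsilon>>0. \<epsilon> \<le> a \<and> (\<forall>w\<in>W. \<forall>t x. \<bar>t - \<theta>0\<bar> < \<epsilon> \<longrightarrow> 0 \<le> x \<longrightarrow>
      \<epsilon> * (x + 1) \<le> norm (complex_of_real x * cis t - w))"
    by (intro eventually_at_right_0_ex_pos eventually_conj)
  with \<theta>0 that show ?thesis
    by blast
qed

lemma norm_ge_in_sector_off_ray:
  fixes k M :: nat
  assumes ray_bound: "\<forall>t x. \<bar>t - \<theta>0\<bar> < \<epsilon> \<longrightarrow> 0 \<le> x \<longrightarrow>
      \<epsilon> * (x + 1) \<le> norm (complex_of_real x * cis t - w)"
    and \<eta>: "\<eta> \<in> sector {\<theta>0 - \<epsilon><..<\<theta>0 + \<epsilon>}" and "0 < \<gamma>" and "k \<le> M"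
  shows "\<epsilon> / M * (norm \<eta> + k) \<le> norm (of_nat \<gamma> * \<eta> - w)"
proof (cases "M = 0")
  case False
  obtain t where "t \<in> {\<theta>0 - \<epsilon><..<\<theta>0 + \<epsilon>}" and t: "\<eta> = complex_of_real (norm \<eta>) * cis t"
    using \<eta> unfolding sector_def by auto
  then have "\<bar>t - \<theta>0\<bar> < \<epsilon>" "0 < \<epsilon>"
    by auto
  have "norm \<eta> \<le> M * norm \<eta>"
    using False by (simp add: mult_le_cancel_right1)
  then have "norm \<eta> + k \<le> M * (norm \<eta> + 1)"
    using \<open>k \<le> M\<close> by (simp add: algebra_simps)
  then have "\<epsilon> / M * (norm \<eta> + k) \<le> \<epsilon> / M * (M * (norm \<eta> + 1))"
    using \<open>0 < \<epsilon>\<close> by (intro mult_left_mono) auto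
  also have "\<dots> \<le> \<epsilon> * (real \<gamma> * norm \<eta> + 1)"
    using False \<open>0 < \<gamma>\<close> \<open>0 < \<epsilon>\<close> by (simp add: mult_le_cancel_right1)
  also have "\<dots> \<le> norm (complex_of_real (real \<gamma> * norm \<eta>) * cis t - w)"
    using ray_bound \<open>\<bar>t - \<theta>0\<bar> < \<epsilon>\<close> by (simp del: of_real_mult)
  also have "complex_of_real (real \<gamma> * norm \<eta>) * cis t = of_nat \<gamma> * \<eta>"
    by (subst (2) t) simp
  finally show ?thesis .
qed simp

definition mdot :: "nat \<Rightarrow> (nat \<Rightarrow> complex) \<Rightarrow> (nat \<Rightarrow> nat) \<Rightarrow> complex" where
  "mdot n' lam m = (\<Sum>j=1..n'. lam j * of_nat (m j))"

lemma finite_multi_idx_mabs_less: "finite {m \<in> multi_idx n'. mabs n' m < M}"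
proof (rule finite_subset)
  show "{m \<in> multi_idx n'. mabs n' m < M} \<subseteq> {m. \<forall>j. (j \<in> {1..n'} \<longrightarrow> m j \<in> {..<M}) \<and> (j \<notin> {1..n'} \<longrightarrow> m j = 0)}"
  proof (intro subsetI CollectI allI conjI impI)
    fix m j assume "m \<in> {m \<in> multi_idx n'. mabs n' m < M}" "j \<in> {1..n'}"
    moreover have "m j \<le> mabs n' m"
      unfolding mabs_def using \<open>j \<in> {1..n'}\<close> by (intro member_le_sum) auto
    ultimately show "m j \<in> {..<M}"
      by auto
  qed (auto simp: multi_idx_def)
qed (rule finite_set_of_finite_funs; auto)

lemma Re_cnj_mult_mdot_ge:
  assumes "\<forall>j\<in>{1..n'}. c \<le> Re (cnj u * lam j)"
  shows "c * mabs n' m \<le> Re (cnj u * mdot n' lam m)"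
proof -
  have "c * mabs n' m = (\<Sum>j=1..n'. real (m j) * c)"
    unfolding mabs_def by (simp add: sum_distrib_left mult.commute)
  also have "\<dots> \<le> (\<Sum>j=1..n'. real (m j) * Re (cnj u * lam j))"
    using assms by (intro sum_mono mult_left_mono) auto
  also have "\<dots> = Re (cnj u * mdot n' lam m)"
    unfolding mdot_def by (simp add: sum_distrib_left Re_sum algebra_simps)
  finally show ?thesis .
qed

lemma norm_ge_for_large_index:
  assumes "norm u = 1" and "\<forall>j\<in>{1..n'}. c \<le> Re (cnj u * lam j)"
    and "2 * norm l \<le> c * mabs n' m" and "norm \<eta> \<le> 2 * Re (cnj u * \<eta>)" and "0 < \<gamma>"
  shows "(norm \<eta> + c * mabs n' m) / 2 \<le> norm (of_nat \<gamma> * \<eta> + mdot n' lam m - l)"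
proof -
  have "0 \<le> Re (cnj u * \<eta>)"
    using assms(4) norm_ge_zero[of \<eta>] by linarith
  then have "Re (cnj u * \<eta>) \<le> real \<gamma> * Re (cnj u * \<eta>)"
    using assms(5) by (simp add: mult_le_cancel_right1)
  moreover have "Re (cnj u * l) \<le> norm l"
    using complex_Re_le_cmod[of "cnj u * l"] assms(1) by (simp add: norm_mult)
  ultimately have "(norm \<eta> + c * mabs n' m) / 2
      \<le> real \<gamma> * Re (cnj u * \<eta>) + Re (cnj u * mdot n' lam m) - Re (cnj u * l)"
    using Re_cnj_mult_mdot_ge[OF assms(2), of m] assms(3,4) by argo
  also have "\<dots> = Re (cnj u * (of_nat \<gamma> * \<eta> + mdot n' lam m - l))"
    by (simp add: algebra_simps)
  also have "\<dots> \<le> norm (of_nat \<gamma> * \<eta> + mdot n' lam m - l)"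
    using complex_Re_le_cmod assms(1) by (metis mult_1 norm_mult complex_mod_cnj)
  finally show ?thesis .
qed

lemma norm_ge_on_sector:
  assumes "0 < \<gamma>" "0 < M" "0 < c"
    and c_le: "\<forall>j\<in>{1..n'}. c \<le> Re (cnj (cis \<theta>) * lam j)"
    and M_le: "2 * norm l \<le> c * M"
    and "\<bar>\<theta>0 - \<theta>\<bar> < pi / 6" "\<epsilon> \<le> pi / 6"
    and ray_bound: "mabs n' m < M \<Longrightarrow> \<forall>t x. \<bar>t - \<theta>0\<bar> < \<epsilon> \<longrightarrow> 0 \<le> x \<longrightarrow>
      \<epsilon> * (x + 1) \<le> norm (complex_of_real x * cis t - (l - mdot n' lam m))"
    and \<eta>: "\<eta> \<in> sector {\<theta>0 - \<epsilon><..<\<theta>0 + \<epsilon>}"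
  shows "min (\<epsilon> / M) (min 1 c / 2) * (norm \<eta> + mabs n' m) \<le> norm (of_nat \<gamma> * \<eta> + mdot n' lam m - l)"
proof (cases "mabs n' m < M")
  case True
  have "min (\<epsilon> / M) (min 1 c / 2) * (norm \<eta> + mabs n' m) \<le> \<epsilon> / M * (norm \<eta> + mabs n' m)"
    by (intro mult_right_mono) auto
  also have "\<dots> \<le> norm (of_nat \<gamma> * \<eta> - (l - mdot n' lam m))"
    using True ray_bound \<eta> assms(1) by (intro norm_ge_in_sector_off_ray) auto
  finally show ?thesis
    by (simp add: algebra_simps)
next
  case False
  have "\<theta> - pi / 6 < \<theta>0" "\<theta>0 < \<theta> + pi / 6"
    using assms(6) by linarith+
  then have "{\<theta>0 - \<epsilon><..<\<theta>0 + \<epsilon>} \<subseteq> {\<theta> - pi / 3<..<\<theta> + pi / 3}"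
    using assms(7) by auto
  then have "\<eta> \<in> sector {\<theta> - pi / 3<..<\<theta> + pi / 3}"
    using \<eta> sector_mono by blast
  then have "cos (pi / 3) * norm \<eta> \<le> Re (cnj (cis \<theta>) * \<eta>)"
    by (rule Re_cnj_cis_mult_ge_in_sector) auto
  then have "norm \<eta> \<le> 2 * Re (cnj (cis \<theta>) * \<eta>)"
    unfolding cos_60 by linarith
  moreover have "c * M \<le> c * mabs n' m"
    using False assms(3) by (intro mult_left_mono) auto
  then have "2 * norm l \<le> c * mabs n' m"
    using M_le by linarith
  ultimately have large: "(norm \<eta> + c * mabs n' m) / 2 \<le> norm (of_nat \<gamma> * \<eta> + mdot n' lam m - l)"
    by (intro norm_ge_for_large_index[where u = "cis \<theta>"] c_le assms(1)) simp_all
  have "min (\<epsilon> / M) (min 1 c / 2) * (norm \<eta> + mabs n' m) \<le> min 1 c / 2 * (norm \<eta> + mabs n' m)"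
    by (intro mult_right_mono min.cobounded2) auto
  also have "\<dots> = min 1 c * norm \<eta> / 2 + min 1 c * mabs n' m / 2"
    by (simp add: algebra_simps)
  also have "\<dots> \<le> 1 * norm \<eta> / 2 + c * mabs n' m / 2"
    by (intro add_mono divide_right_mono mult_right_mono min.cobounded1 min.cobounded2) auto
  finally show ?thesis
    using large by simp
qed

lemma sector_inter_uminus_closure_Lset_empty:
  assumes "0 < \<gamma>" "0 < C"
    and bound: "\<And>\<eta> i m. \<eta> \<in> sector J \<Longrightarrow> i \<in> {1..n} \<Longrightarrow> m \<in> multi_idx n' \<Longrightarrow> 2 \<le> mabs n' m \<Longrightarrow>
      C * (norm \<eta> + mabs n' m) \<le> norm (of_nat \<gamma> * \<eta> + mdot n' lam m - lam i)"
  shows "sector J \<inter> uminus ` closure (Lset n n' lam) = {}"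
proof (rule sector_inter_uminus_closure_empty[of "real \<gamma>" C])
  fix \<eta> z assume "\<eta> \<in> sector J" "z \<in> Lset n n' lam"
  moreover obtain i m where "i \<in> {1..n}" "m \<in> multi_idx n'" "2 \<le> mabs n' m"
    and z: "z = mdot n' lam m - lam i"
    using \<open>z \<in> Lset n n' lam\<close> unfolding Lset_def mdot_def by auto
  ultimately have "C * (norm \<eta> + mabs n' m) \<le> norm (of_nat \<gamma> * \<eta> + mdot n' lam m - lam i)"
    by (intro bound)
  moreover have "C * norm \<eta> \<le> C * (norm \<eta> + mabs n' m)"
    using \<open>0 < C\<close> by simp
  ultimately show "C * norm \<eta> \<le> norm (complex_of_real (real \<gamma>) * \<eta> + z)"
    unfolding z by (simp add: algebra_simps)
qed (use assms(1,2) in auto)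


lemma sector_with_uniform_lower_bound:
  assumes "0 < \<gamma>" "\<delta> < pi / 2"
    and lam_sector: "\<forall>j\<in>{1..n'}. lam j \<in> sector {\<theta> - \<delta><..<\<theta> + \<delta>}"
    and nonres: "\<forall>m\<in>multi_idx n'. \<forall>i\<in>{1..n}. 2 \<le> mabs n' m \<longrightarrow> mdot n' lam m \<noteq> lam i"
  obtains \<theta>0 \<epsilon> C where "0 < \<epsilon>" "0 < C"
    "\<And>\<eta> i m. \<eta> \<in> sector {\<theta>0 - \<epsilon><..<\<theta>0 + \<epsilon>} \<Longrightarrow> i \<in> {1..n} \<Longrightarrow> m \<in> multi_idx n' \<Longrightarrow>
      2 \<le> mabs n' m \<Longrightarrow> C * (norm \<eta> + mabs n' m) \<le> norm (of_nat \<gamma> * \<eta> + mdot n' lam m - lam i)"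
proof -
  obtain c where "0 < c" and c_le: "\<forall>j\<in>{1..n'}. c \<le> Re (cnj (cis \<theta>) * lam j)"
    using ex_pos_Re_lower_bound_in_sector[of "lam ` {1..n'}" \<theta> \<delta>] assms(2) lam_sector by auto
  obtain M :: nat where "0 < M" and M_le: "\<forall>i\<in>{1..n}. 2 * norm (lam i) \<le> c * M"
    using ex_nat_mult_ge_finite[of "{1..n}" c "\<lambda>i. 2 * norm (lam i)"] \<open>0 < c\<close> by auto
  define W where "W = (\<lambda>(i, m). lam i - mdot n' lam m) `
    ({1..n} \<times> {m \<in> multi_idx n'. 2 \<le> mabs n' m \<and> mabs n' m < M})"
  have "finite W"
    unfolding W_def using finite_multi_idx_mabs_less[of n' M]
    by (intro finite_imageI finite_cartesian_product) (auto elim: finite_subset[rotated])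
  moreover have "0 \<notin> W"
    using nonres unfolding W_def by force
  ultimately obtain \<theta>0 \<epsilon> where \<theta>0: "\<bar>\<theta>0 - \<theta>\<bar> < pi / 6" and "0 < \<epsilon>" "\<epsilon> \<le> pi / 6"
    and ray_bound: "\<forall>w\<in>W. \<forall>t x. \<bar>t - \<theta>0\<bar> < \<epsilon> \<longrightarrow> 0 \<le> x \<longrightarrow>
      \<epsilon> * (x + 1) \<le> norm (complex_of_real x * cis t - w)"
    by (rule direction_uniformly_off_rays[where a = "pi / 6"]) simp_all
  define C where "C = min (\<epsilon> / M) (min 1 c / 2)"
  have bound: "C * (norm \<eta> + mabs n' m) \<le> norm (of_nat \<gamma> * \<eta> + mdot n' lam m - lam i)"
    if \<eta>: "\<eta> \<in> sector {\<theta>0 - \<epsilon><..<\<theta>0 + \<epsilon>}" and i: "i \<in> {1..n}"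
      and m: "m \<in> multi_idx n'" "2 \<le> mabs n' m" for \<eta> i m
  proof -
    have "lam i - mdot n' lam m \<in> W" if "mabs n' m < M"
      unfolding W_def using i m that by (intro image_eqI[of _ _ "(i, m)"]) auto
    then have "mabs n' m < M \<Longrightarrow> \<forall>t x. \<bar>t - \<theta>0\<bar> < \<epsilon> \<longrightarrow> 0 \<le> x \<longrightarrow>
        \<epsilon> * (x + 1) \<le> norm (complex_of_real x * cis t - (lam i - mdot n' lam m))"
      by (rule bspec[OF ray_bound])
    then show ?thesis
      unfolding C_def using M_le i
      by (intro norm_ge_on_sector[OF assms(1) \<open>0 < M\<close> \<open>0 < c\<close> c_le _ \<theta>0 \<open>\<epsilon> \<le> pi / 6\<close> _ \<eta>]) auto
  qed
  have "0 < C"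
    unfolding C_def using \<open>0 < \<epsilon>\<close> \<open>0 < M\<close> \<open>0 < c\<close> by simp
  show ?thesis
    using \<open>0 < \<epsilon>\<close> \<open>0 < C\<close> bound by (rule that)
qed

theorem lemma2p3:
  fixes \<gamma> n n' :: nat and lam :: "nat \<Rightarrow> complex"
  assumes "\<gamma> > 0" and "1 \<le> n'" and "n' \<le> n"
    and cond1: "\<exists>\<theta> \<delta>. 0 \<le> \<theta> \<and> \<theta> < 2 * pi \<and> 0 < \<delta> \<and> \<delta> < pi / 2 \<and>
                  (\<forall>j\<in>{1..n'}. lam j \<in> sector {\<theta> - \<delta><..<\<theta> + \<delta>})"
    and cond2: "\<forall>m\<in>multi_idx n'. \<forall>i\<in>{1..n}. mabs n' m \<ge> 2 \<longrightarrow>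
                  (\<Sum>j=1..n'. lam j * of_nat (m j)) - lam i \<noteq> 0"
  shows "\<exists>\<theta>0 \<epsilon>0 C. \<epsilon>0 > 0 \<and> C > 0 \<and>
           sector {\<theta>0 - \<epsilon>0<..<\<theta>0 + \<epsilon>0} \<inter> uminus ` closure (Lset n n' lam) = {} \<and>
           (\<forall>\<eta>\<in>sector {\<theta>0 - \<epsilon>0<..<\<theta>0 + \<epsilon>0}. \<forall>i\<in>{1..n}. \<forall>m\<in>multi_idx n'.
              mabs n' m \<ge> 2 \<longrightarrow>
              norm (of_nat \<gamma> * \<eta> + (\<Sum>j=1..n'. lam j * of_nat (m j)) - lam i)
                \<ge> C * (norm \<eta> + real (mabs n' m)))"
proof -
  obtain \<theta> \<delta> where "\<delta> < pi / 2" and "\<forall>j\<in>{1..n'}. lam j \<in> sector {\<theta> - \<delta><..<\<theta> + \<delta>}"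
    using cond1 by blast
  moreover have "\<forall>m\<in>multi_idx n'. \<forall>i\<in>{1..n}. 2 \<le> mabs n' m \<longrightarrow> mdot n' lam m \<noteq> lam i"
    using cond2 unfolding mdot_def by auto
  ultimately obtain \<theta>0 \<epsilon> C where "0 < \<epsilon>" "0 < C" and bound: "\<And>\<eta> i m.
      \<eta> \<in> sector {\<theta>0 - \<epsilon><..<\<theta>0 + \<epsilon>} \<Longrightarrow> i \<in> {1..n} \<Longrightarrow> m \<in> multi_idx n' \<Longrightarrow> 2 \<le> mabs n' m \<Longrightarrow>
      C * (norm \<eta> + mabs n' m) \<le> norm (of_nat \<gamma> * \<eta> + mdot n' lam m - lam i)"
    by (rule sector_with_uniform_lower_bound[OF assms(1)]) (rule that)
  moreover have "sector {\<theta>0 - \<epsilon><..<\<theta>0 + \<epsilon>} \<inter> uminus ` closure (Lset n n' lam) = {}"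
    using assms(1) \<open>0 < C\<close> bound by (rule sector_inter_uminus_closure_Lset_empty)
  ultimately show ?thesis
    unfolding mdot_def by (intro exI[of _ \<theta>0] exI[of _ \<epsilon>] exI[of _ C]) auto
qed

end
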